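(* Let $k,s\in\mathbb R$ with $k-s<-1$, and let $b>1/2$ and $-1/2<b'\le0$ satisfy $1+s-k+3b'-b>0$ (this holds for $b$ close enough to $1/2$ and $b'$ close enough to $-1/2$). Then there is no constant $C$ such that $\|\partial_x(u_1\overline{u_2})\|_{Y^{s,b'}}\le C\|u_1\|_{X^{k,b}}\|u_2\|_{X^{k,b}}$ for all $u_1,u_2\in\mathcal S(\mathbb R^2)$.
   Context: $\langle x\rangle=(1+|x|^2)^{1/2}$; $\hat{\ }$ = space-time Fourier transform. $X^{s,b}$ and $Y^{s,b}$ are the completions of $\mathcal S(\mathbb R^2)$ under $\|u\|_{X^{s,b}}=\|\langle\tau+\xi^2\rangle^b\langle\xi\rangle^s\hat u\|_{L^2_{\tau,\xi}}$ and $\|v\|_{Y^{s,b}}=\|\langle\tau-\xi^3\rangle^b\langle\xi\rangle^s\hat v\|_{L^2_{\tau,\xi}}$. *)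

theory Defs
  imports "HOL-Analysis.Analysis"
begin

text \<open>Functions on space-time R^2 are modelled as maps real \<times> real \<Rightarrow> complex,
  the first coordinate being time t, the second space x.\<close>

definition jbr :: "real \<Rightarrow> real" where
  "jbr y = sqrt (1 + y\<^sup>2)"

definition dt :: "(real \<times> real \<Rightarrow> complex) \<Rightarrow> real \<times> real \<Rightarrow> complex" where
  "dt f = (\<lambda>(t, x). vector_derivative (\<lambda>r. f (r, x)) (at t))"

definition dx :: "(real \<times> real \<Rightarrow> complex) \<Rightarrow> real \<times> real \<Rightarrow> complex" where
  "dx f = (\<lambda>(t, x). vector_derivative (\<lambda>y. f (t, y)) (at x))"

text \<open>Schwartz class S(R^2): all iterated partial derivatives exist (each is
  Frechet differentiable, hence the function is C^infinity) and every
  t^m x^n d_t^a d_x^b f is bounded.\<close>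
definition schwartz :: "(real \<times> real \<Rightarrow> complex) \<Rightarrow> bool" where
  "schwartz f \<longleftrightarrow>
     (\<forall>a b. ((dt ^^ a) ((dx ^^ b) f)) differentiable_on UNIV) \<and>
     (\<forall>a b m n. \<exists>M. \<forall>t x.
        \<bar>t\<bar> ^ m * \<bar>x\<bar> ^ n * cmod (((dt ^^ a) ((dx ^^ b) f)) (t, x)) \<le> M)"

definition fourier2 :: "(real \<times> real \<Rightarrow> complex) \<Rightarrow> real \<times> real \<Rightarrow> complex" where
  "fourier2 u = (\<lambda>(\<tau>, \<xi>). integral\<^sup>L lborel
      (\<lambda>(t, x). exp (- \<i> * complex_of_real (t * \<tau> + x * \<xi>)) * u (t, x)))"

definition Xnorm :: "real \<Rightarrow> real \<Rightarrow> (real \<times> real \<Rightarrow> complex) \<Rightarrow> real" where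
  "Xnorm s b u = sqrt (integral\<^sup>L lborel (\<lambda>(\<tau>, \<xi>).
      (jbr (\<tau> + \<xi>\<^sup>2) powr b * jbr \<xi> powr s * cmod (fourier2 u (\<tau>, \<xi>)))\<^sup>2))"

definition Ynorm :: "real \<Rightarrow> real \<Rightarrow> (real \<times> real \<Rightarrow> complex) \<Rightarrow> real" where
  "Ynorm s b v = sqrt (integral\<^sup>L lborel (\<lambda>(\<tau>, \<xi>).
      (jbr (\<tau> - \<xi> ^ 3) powr b * jbr \<xi> powr s * cmod (fourier2 v (\<tau>, \<xi>)))\<^sup>2))"

end

theory Submission
  imports Defs "HOL-Probability.Characteristic_Functions" "HOL-Real_Asymp.Real_Asymp"
begin

text \<open>
  Let \<open>u\<^sub>2\<close> be a fixed Gaussian and \<open>u\<^sub>1\<close> a Gaussian wave packet whose space-time Fourier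
  transform is a Gaussian bump centred at \<open>(\<tau>, \<xi>) = (-N\<^sup>2, N)\<close>, a point of the parabola
  \<open>\<tau> = -\<xi>\<^sup>2\<close> on which the weight of \<open>X\<^bsup>k,b\<^esup>\<close> is smallest. On the bump
  \<open>\<langle>\<tau> + \<xi>\<^sup>2\<rangle> \<lesssim> N\<close> and \<open>\<langle>\<xi>\<rangle> \<approx> N\<close>, so \<open>\<parallel>u\<^sub>1\<parallel> \<lesssim> N\<^bsup>k+b\<^esup>\<close>.
  The Fourier transform of \<open>\<partial>\<^sub>x(u\<^sub>1 conj u\<^sub>2)\<close> is \<open>i\<xi>\<close> times a Gaussian bump at the
  same point, where \<open>\<langle>\<tau> - \<xi>\<^sup>3\<rangle> \<approx> N\<^sup>3\<close>; since \<open>b' \<le> 0\<close> its \<open>Y\<^bsup>s,b'\<^esup>\<close> norm is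
  at least of order \<open>N\<^bsup>1+s+3b'\<^esup>\<close>. The bilinear estimate would force \<open>1 + s + 3b' \<le> k + b\<close>.

  All Fourier transforms are computed exactly: the wave packets \<open>p(t) e\<^bsup>-at\<^sup>2+i\<theta>t\<^esup>\<close> with
  polynomial \<open>p\<close> are closed under modulation and differentiation, and the Gaussian integral
  is the characteristic function of the standard normal distribution.
\<close>

section \<open>Gaussian wave packets\<close>

definition wave_packet :: "complex poly \<Rightarrow> real \<Rightarrow> real \<Rightarrow> real \<Rightarrow> complex" where
  "wave_packet p \<theta> a t =
     poly p (of_real t) * exp (- of_real a * (of_real t)\<^sup>2 + \<i> * of_real \<theta> * of_real t)"

definition packet_deriv :: "real \<Rightarrow> real \<Rightarrow> complex poly \<Rightarrow> complex poly" where
  "packet_deriv \<theta> a p = pderiv p + [:\<i> * of_real \<theta>, - of_real (2 * a):] * p"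

lemma has_vector_derivative_wave_packet:
  "(wave_packet p \<theta> a has_vector_derivative wave_packet (packet_deriv \<theta> a p) \<theta> a t) (at t)"
proof -
  let ?\<Phi> = "\<lambda>q z. poly q z * exp (- of_real a * z\<^sup>2 + \<i> * of_real \<theta> * z)"
  have "(?\<Phi> p has_field_derivative ?\<Phi> (packet_deriv \<theta> a p) z) (at z)" for z
    by (auto intro!: derivative_eq_intros poly_DERIV simp: packet_deriv_def algebra_simps poly_pCons)
  from has_vector_derivative_real_field[OF this] show ?thesis
    unfolding wave_packet_def[abs_def] .
qed

lemma wave_packet_differentiable: "wave_packet p \<theta> a differentiable at t"
  using has_vector_derivative_wave_packet differentiableI_vector by blast

lemma continuous_on_wave_packet: "continuous_on UNIV (wave_packet p \<theta> a)"
  by (intro continuous_at_imp_continuous_on ballI differentiable_imp_continuous_within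
      wave_packet_differentiable)

lemma borel_measurable_wave_packet [measurable]: "wave_packet p \<theta> a \<in> borel_measurable lborel"
  using borel_measurable_continuous_onI[OF continuous_on_wave_packet] by simp

lemma norm_wave_packet: "norm (wave_packet p \<theta> a t) = norm (poly p (of_real t)) * exp (- a * t\<^sup>2)"
  unfolding wave_packet_def by (simp add: norm_mult)

lemma wave_packet_modulate:
  "exp (- \<i> * of_real (t * \<tau>)) * wave_packet p \<theta> a t = wave_packet p (\<theta> - \<tau>) a t"
proof -
  have "- \<i> * of_real (t * \<tau>) + (- of_real a * (of_real t)\<^sup>2 + \<i> * of_real \<theta> * of_real t)
      = - of_real a * (of_real t)\<^sup>2 + \<i> * of_real (\<theta> - \<tau>) * (of_real t :: complex)"
    by (simp add: algebra_simps)
  then show ?thesis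
    unfolding wave_packet_def
    by (simp only: mult.left_commute[of "exp _"] exp_add[symmetric])
qed

lemma wave_packet_mult_cnj:
  "wave_packet 1 \<theta> a t * cnj (wave_packet 1 \<theta>' a' t) = wave_packet 1 (\<theta> - \<theta>') (a + a') t"
proof -
  have "- of_real a * (of_real t)\<^sup>2 + \<i> * of_real \<theta> * of_real t
        + cnj (- of_real a' * (of_real t)\<^sup>2 + \<i> * of_real \<theta>' * of_real t)
      = - of_real (a + a') * (of_real t)\<^sup>2 + \<i> * of_real (\<theta> - \<theta>') * (of_real t :: complex)"
    by (simp add: algebra_simps)
  then show ?thesis
    unfolding wave_packet_def by (simp add: exp_cnj exp_add[symmetric])
qed

definition tensor :: "(real \<Rightarrow> complex) \<Rightarrow> (real \<Rightarrow> complex) \<Rightarrow> real \<times> real \<Rightarrow> complex" where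
  "tensor f g = (\<lambda>(t, x). f t * g x)"

lemma dx_tensor:
  assumes "\<And>x. (g has_vector_derivative g' x) (at x)"
  shows "dx (tensor f g) = tensor f g'"
  unfolding dx_def tensor_def using assms
  by (auto intro!: ext vector_derivative_at has_vector_derivative_mult_right)

lemma dt_tensor:
  assumes "\<And>t. (f has_vector_derivative f' t) (at t)"
  shows "dt (tensor f g) = tensor f' g"
  unfolding dt_def tensor_def using assms
  by (auto intro!: ext vector_derivative_at has_vector_derivative_mult_left)

lemma differentiable_on_tensor:
  assumes "\<And>t. f differentiable at t" and "\<And>x. g differentiable at x"
  shows "tensor f g differentiable_on UNIV"
proof -
  have "(\<lambda>z. f (fst z)) differentiable at z" "(\<lambda>z. g (snd z)) differentiable at z"
    for z :: "real \<times> real"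
    using differentiable_chain_at[OF bounded_linear_imp_differentiable[OF bounded_linear_fst] assms(1)]
      differentiable_chain_at[OF bounded_linear_imp_differentiable[OF bounded_linear_snd] assms(2)]
    by (simp_all add: o_def)
  then have "(\<lambda>z. f (fst z) * g (snd z)) differentiable at z" for z :: "real \<times> real"
    by (rule differentiable_mult)
  then show ?thesis
    unfolding differentiable_on_def tensor_def by (simp add: case_prod_beta' differentiable_at_withinI)
qed

lemma
  fixes f g :: "real \<Rightarrow> 'a::{real_normed_field, banach, second_countable_topology}"
  assumes f: "integrable lborel f" and g: "integrable lborel g"
  shows integrable_lborel_product: "integrable lborel (\<lambda>z::real \<times> real. f (fst z) * g (snd z))"
    and integral_lborel_product:
      "(\<integral>z. f (fst z) * g (snd z) \<partial>lborel) = integral\<^sup>L lborel f * integral\<^sup>L lborel g"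
proof -
  have [measurable]: "f \<in> borel_measurable lborel" "g \<in> borel_measurable lborel"
    using f g by (auto intro: borel_measurable_integrable)
  have int: "integrable (lborel \<Otimes>\<^sub>M lborel) (\<lambda>z::real \<times> real. f (fst z) * g (snd z))"
  proof (rule lborel_pair.Fubini_integrable)
    have "integrable lborel (\<lambda>x. norm (f x) * (\<integral>y. norm (g y) \<partial>lborel))"
      using f by (intro integrable_mult_left) auto
    then show "integrable lborel (\<lambda>x. \<integral>y. norm (f (fst (x, y)) * g (snd (x, y))) \<partial>lborel)"
      by (simp add: norm_mult)
  qed (use g in auto)
  then show "integrable lborel (\<lambda>z::real \<times> real. f (fst z) * g (snd z))"
    by (simp add: lborel_prod)
  have "(\<integral>z. f (fst z) * g (snd z) \<partial>(lborel \<Otimes>\<^sub>M lborel))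
      = (\<integral>x. (\<integral>y. f x * g y \<partial>lborel) \<partial>lborel)"
    using lborel_pair.integral_fst'[OF int] by simp
  then show "(\<integral>z. f (fst z) * g (snd z) \<partial>lborel) = integral\<^sup>L lborel f * integral\<^sup>L lborel g"
    by (simp add: lborel_prod)
qed

definition fourier :: "(real \<Rightarrow> complex) \<Rightarrow> real \<Rightarrow> complex" where
  "fourier f \<tau> = (\<integral>t. exp (- \<i> * of_real (t * \<tau>)) * f t \<partial>lborel)"

lemma integrable_modulated:
  assumes "integrable lborel f"
  shows "integrable lborel (\<lambda>t. exp (- \<i> * of_real (t * \<tau>)) * f t)"
proof (rule Bochner_Integration.integrable_bound[OF assms])
  have [measurable]: "f \<in> borel_measurable lborel"
    using assms by (rule borel_measurable_integrable)
  show "(\<lambda>t. exp (- \<i> * of_real (t * \<tau>)) * f t) \<in> borel_measurable lborel"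
    by measurable
  have "exp (- \<i> * of_real (t * \<tau>)) = exp (\<i> * of_real (- (t * \<tau>)))" for t
    by simp
  then show "AE t in lborel. norm (exp (- \<i> * of_real (t * \<tau>)) * f t) \<le> norm (f t)"
    by (simp add: norm_mult del: exp_minus mult_minus_left)
qed

lemma fourier2_tensor:
  assumes "integrable lborel f" and "integrable lborel g"
  shows "fourier2 (tensor f g) (\<tau>, \<xi>) = fourier f \<tau> * fourier g \<xi>"
proof -
  have exp_split: "exp (- \<i> * of_real (t * \<tau> + x * \<xi>))
      = exp (- \<i> * of_real (t * \<tau>)) * exp (- \<i> * of_real (x * \<xi>))" for t x
    by (simp add: distrib_left flip: exp_add)
  have factor: "exp (- \<i> * of_real (t * \<tau> + x * \<xi>)) * (f t * g x)
      = (exp (- \<i> * of_real (t * \<tau>)) * f t) * (exp (- \<i> * of_real (x * \<xi>)) * g x)" for t x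
    unfolding exp_split by (simp only: ac_simps)
  have "fourier2 (tensor f g) (\<tau>, \<xi>) = (\<integral>z. (exp (- \<i> * of_real (fst z * \<tau>)) * f (fst z))
      * (exp (- \<i> * of_real (snd z * \<xi>)) * g (snd z)) \<partial>lborel)"
    by (simp only: fourier2_def tensor_def case_prod_conv case_prod_beta' fst_conv snd_conv factor)
  also have "\<dots> = fourier f \<tau> * fourier g \<xi>"
    unfolding fourier_def
    by (rule integral_lborel_product[OF integrable_modulated integrable_modulated, OF assms])
  finally show ?thesis .
qed

lemma fourier_wave_packet_eq_integral:
  "fourier (wave_packet p \<theta> a) \<tau> = integral\<^sup>L lborel (wave_packet p (\<theta> - \<tau>) a)"
  unfolding fourier_def wave_packet_modulate ..

lemma powr_times_gaussian_bounded:
  fixes a p :: real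
  assumes "a > 0"
  shows "\<exists>M. \<forall>t. (1 + \<bar>t\<bar>) powr p * exp (- a * t\<^sup>2) \<le> M"
proof -
  define m where "m = \<bar>p\<bar> + 1"
  define K where "K = max 1 (2 * m / a)"
  have m: "m > 0" and K: "K \<ge> 1" "K * (a / (2 * m)) \<ge> 1"
    using assms by (auto simp: m_def K_def field_simps max_def)
  have "(1 + \<bar>t\<bar>) powr p * exp (- a * t\<^sup>2) \<le> (2 * K) powr m" for t
  proof -
    let ?y = "a * t\<^sup>2 / (2 * m)"
    have "0 \<le> (\<bar>t\<bar> - 1)\<^sup>2"
      by simp
    then have "2 * \<bar>t\<bar> \<le> 1 + t\<^sup>2"
      by (simp add: power2_eq_square algebra_simps abs_mult_self_eq)
    then have "1 + \<bar>t\<bar> \<le> 2 * (1 + t\<^sup>2)"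
      by (smt (verit) zero_le_power2)
    also have "1 + t\<^sup>2 \<le> K * (1 + ?y)"
      using K mult_right_mono[OF K(2), of "t\<^sup>2"] by (simp add: algebra_simps)
    also have "1 + ?y \<le> exp ?y"
      by (rule exp_ge_add_one_self)
    finally have base: "1 + \<bar>t\<bar> \<le> 2 * K * exp ?y"
      using K by simp
    have "(1 + \<bar>t\<bar>) powr p \<le> (1 + \<bar>t\<bar>) powr m"
      by (rule powr_mono) (auto simp: m_def)
    also have "\<dots> \<le> (2 * K * exp ?y) powr m"
      using base m by (intro powr_mono2) auto
    also have "\<dots> = (2 * K) powr m * exp (a / 2 * t\<^sup>2)"
      using K m by (simp add: powr_mult exp_powr_real)
    finally have "(1 + \<bar>t\<bar>) powr p * exp (- a * t\<^sup>2)
        \<le> (2 * K) powr m * (exp (a / 2 * t\<^sup>2) * exp (- a * t\<^sup>2))"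
      by (simp add: mult_right_mono mult.assoc)
    also have "\<dots> = (2 * K) powr m * exp (- (a / 2) * t\<^sup>2)"
      by (simp flip: exp_add)
    also have "\<dots> \<le> (2 * K) powr m"
      using assms by (intro mult_left_le) auto
    finally show ?thesis .
  qed
  then show ?thesis by blast
qed

lemma integrable_gaussian:
  fixes a :: real
  assumes "a > 0"
  shows "integrable lborel (\<lambda>t. exp (- a * t\<^sup>2))"
proof -
  define \<sigma> where "\<sigma> = sqrt (1 / (2 * a))"
  have \<sigma>: "\<sigma> > 0" "2 * \<sigma>\<^sup>2 = 1 / a"
    using assms by (auto simp: \<sigma>_def)
  have "exp (- a * t\<^sup>2) = sqrt (2 * pi * \<sigma>\<^sup>2) * normal_density 0 \<sigma> t" for t
    using \<sigma> assms by (simp add: normal_density_def field_simps)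
  then show ?thesis
    using \<sigma> by simp
qed

lemma norm_poly_of_real_le:
  fixes p :: "complex poly"
  shows "norm (poly p (of_real t)) \<le> (\<Sum>i\<le>degree p. norm (coeff p i)) * (1 + \<bar>t\<bar>) ^ degree p"
proof -
  have "norm (poly p (of_real t)) \<le> (\<Sum>i\<le>degree p. norm (coeff p i) * \<bar>t\<bar> ^ i)"
    unfolding poly_altdef
    by (rule order_trans[OF norm_sum], intro sum_mono) (simp add: norm_mult norm_power)
  also have "\<dots> \<le> (\<Sum>i\<le>degree p. norm (coeff p i) * (1 + \<bar>t\<bar>) ^ degree p)"
    by (intro sum_mono mult_left_mono order_trans[OF power_mono power_increasing]) auto
  finally show ?thesis
    by (simp add: sum_distrib_right)
qed

lemma wave_packet_poly_decay:
  assumes "a > 0"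
  shows "\<exists>M. \<forall>t. \<bar>t\<bar> ^ m * norm (wave_packet p \<theta> a t) \<le> M"
proof -
  define S where "S = (\<Sum>i\<le>degree p. norm (coeff p i))"
  have S: "S \<ge> 0"
    unfolding S_def by (simp add: sum_nonneg)
  obtain M where M: "\<And>t. (1 + \<bar>t\<bar>) powr real (m + degree p) * exp (- a * t\<^sup>2) \<le> M"
    using powr_times_gaussian_bounded[OF assms] by blast
  have "\<bar>t\<bar> ^ m * norm (wave_packet p \<theta> a t) \<le> S * M" for t
  proof -
    have "\<bar>t\<bar> ^ m * norm (wave_packet p \<theta> a t)
        \<le> (1 + \<bar>t\<bar>) ^ m * (S * (1 + \<bar>t\<bar>) ^ degree p * exp (- a * t\<^sup>2))"
      unfolding norm_wave_packet
      using norm_poly_of_real_le[of p t, folded S_def] S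
      by (intro mult_mono mult_right_mono power_mono) auto
    also have "\<dots> = S * ((1 + \<bar>t\<bar>) ^ (m + degree p) * exp (- a * t\<^sup>2))"
      by (simp add: power_add ac_simps)
    also have "\<dots> = S * ((1 + \<bar>t\<bar>) powr real (m + degree p) * exp (- a * t\<^sup>2))"
      by (subst powr_realpow) auto
    also have "\<dots> \<le> S * M"
      using M S by (intro mult_left_mono)
    finally show ?thesis .
  qed
  then show ?thesis by blast
qed

lemma wave_packet_le_gaussian:
  assumes "a > 0"
  obtains M where "\<And>t. norm (wave_packet p \<theta> a t) \<le> M * exp (- (a / 2) * t\<^sup>2)"
proof -
  obtain M where M: "\<And>t. \<bar>t\<bar> ^ 0 * norm (wave_packet p \<theta> (a / 2) t) \<le> M"
    using wave_packet_poly_decay[of "a / 2"] assms by fastforce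
  have "norm (wave_packet p \<theta> a t)
      = norm (wave_packet p \<theta> (a / 2) t) * exp (- (a / 2) * t\<^sup>2)" for t
    by (simp add: norm_wave_packet mult.assoc flip: exp_add)
  then show ?thesis
    using M by (intro that) (simp add: mult_right_mono)
qed

lemma integrable_wave_packet:
  assumes "a > 0"
  shows "integrable lborel (wave_packet p \<theta> a)"
proof -
  obtain M where M: "\<And>t. norm (wave_packet p \<theta> a t) \<le> M * exp (- (a / 2) * t\<^sup>2)"
    using wave_packet_le_gaussian[OF assms] by blast
  have "integrable lborel (\<lambda>t. M * exp (- (a / 2) * t\<^sup>2))"
    using assms by (intro integrable_mult_right integrable_gaussian) simp
  then show ?thesis
  proof (rule Bochner_Integration.integrable_bound)
    show "AE t in lborel. norm (wave_packet p \<theta> a t) \<le> norm (M * exp (- (a / 2) * t\<^sup>2))"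
      using M by (intro AE_I2 order_trans[OF M]) simp
  qed simp
qed

lemma
  assumes "a > 0"
  shows wave_packet_tendsto_at_top: "(wave_packet p \<theta> a \<longlongrightarrow> 0) at_top"
    and wave_packet_tendsto_at_bot: "(wave_packet p \<theta> a \<longlongrightarrow> 0) at_bot"
proof -
  obtain M where M: "\<And>t. norm (wave_packet p \<theta> a t) \<le> M * exp (- (a / 2) * t\<^sup>2)"
    using wave_packet_le_gaussian[OF assms] by blast
  have "((\<lambda>t. M * exp (- (a / 2) * t\<^sup>2)) \<longlongrightarrow> 0) at_top"
    "((\<lambda>t. M * exp (- (a / 2) * t\<^sup>2)) \<longlongrightarrow> 0) at_bot"
    using assms by real_asymp+
  then show "(wave_packet p \<theta> a \<longlongrightarrow> 0) at_top" "(wave_packet p \<theta> a \<longlongrightarrow> 0) at_bot"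
    by (auto intro: Lim_null_comparison[OF always_eventually] M)
qed

lemma schwartz_tensor_wave_packet:
  assumes "a > 0" and "c > 0"
  shows "schwartz (tensor (wave_packet p \<theta> a) (wave_packet q \<eta> c))"
proof -
  have derivs: "(dt ^^ i) ((dx ^^ j) (tensor (wave_packet p \<theta> a) (wave_packet q \<eta> c)))
      = tensor (wave_packet ((packet_deriv \<theta> a ^^ i) p) \<theta> a)
               (wave_packet ((packet_deriv \<eta> c ^^ j) q) \<eta> c)" for i j
  proof -
    have "(dx ^^ j) (tensor f (wave_packet q \<eta> c)) = tensor f (wave_packet ((packet_deriv \<eta> c ^^ j) q) \<eta> c)"
      for f by (induction j) (simp_all add: dx_tensor has_vector_derivative_wave_packet)
    moreover have "(dt ^^ i) (tensor (wave_packet p \<theta> a) g) = tensor (wave_packet ((packet_deriv \<theta> a ^^ i) p) \<theta> a) g"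
      for g by (induction i) (simp_all add: dt_tensor has_vector_derivative_wave_packet)
    ultimately show ?thesis by simp
  qed
  have bounded: "\<exists>M. \<forall>t x. \<bar>t\<bar> ^ m * \<bar>x\<bar> ^ n * norm (tensor (wave_packet p' \<theta> a) (wave_packet q' \<eta> c) (t, x)) \<le> M"
    for m n p' q'
  proof -
    obtain M1 where M1: "\<And>t. \<bar>t\<bar> ^ m * norm (wave_packet p' \<theta> a t) \<le> M1"
      using wave_packet_poly_decay[OF assms(1)] by blast
    obtain M2 where M2: "\<And>x. \<bar>x\<bar> ^ n * norm (wave_packet q' \<eta> c x) \<le> M2"
      using wave_packet_poly_decay[OF assms(2)] by blast
    have "\<bar>t\<bar> ^ m * \<bar>x\<bar> ^ n * norm (tensor (wave_packet p' \<theta> a) (wave_packet q' \<eta> c) (t, x))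
        = (\<bar>t\<bar> ^ m * norm (wave_packet p' \<theta> a t)) * (\<bar>x\<bar> ^ n * norm (wave_packet q' \<eta> c x))" for t x
      by (simp add: tensor_def norm_mult ac_simps)
    also have "\<dots> t x \<le> M1 * M2" for t x
      by (rule mult_mono[OF M1 M2]) (auto intro: order_trans[OF _ M1])
    finally show ?thesis by blast
  qed
  show ?thesis
    unfolding schwartz_def derivs
    by (auto intro: bounded differentiable_on_tensor wave_packet_differentiable)
qed

section \<open>Fourier transforms of wave packets\<close>

lemma integral_eq_0_if_has_vector_derivative:
  fixes F f :: "real \<Rightarrow> 'a::euclidean_space"
  assumes "\<And>t. (F has_vector_derivative f t) (at t)" and "continuous_on UNIV f"
    and "integrable lborel f" and "(F \<longlongrightarrow> 0) at_bot" and "(F \<longlongrightarrow> 0) at_top"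
  shows "integral\<^sup>L lborel f = 0"
proof -
  have "(LBINT t=-\<infinity>..\<infinity>. f t) = 0 - 0"
    by (rule interval_integral_FTC_integrable[where F = F])
      (use assms in \<open>auto simp: set_integrable_def einterval_eq_UNIV ereal_tendsto_simps1
        continuous_on_interior\<close>)
  then show ?thesis
    by (simp add: interval_lebesgue_integral_def einterval_eq_UNIV set_lebesgue_integral_def)
qed

lemma integral_wave_packet_deriv:
  assumes "a > 0"
  shows "integral\<^sup>L lborel (wave_packet (packet_deriv \<theta> a p) \<theta> a) = 0"
  using assms
  by (intro integral_eq_0_if_has_vector_derivative[OF has_vector_derivative_wave_packet]
      continuous_on_wave_packet integrable_wave_packet wave_packet_tendsto_at_bot
      wave_packet_tendsto_at_top)

lemma integral_wave_packet_half:
  "integral\<^sup>L lborel (wave_packet 1 \<theta> (1/2)) = of_real (sqrt (2 * pi) * exp (- \<theta>\<^sup>2 / 2))"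
proof -
  have "std_normal_density t *\<^sub>R iexp (\<theta> * t) = of_real (1 / sqrt (2 * pi)) * wave_packet 1 \<theta> (1/2) t"
    for t
  proof -
    have "of_real (exp (- t\<^sup>2 / 2)) * iexp (\<theta> * t)
        = exp (- of_real (1/2) * (of_real t)\<^sup>2 + \<i> * of_real \<theta> * (of_real t :: complex))"
      by (simp add: mult.assoc flip: exp_add exp_of_real)
    then show ?thesis
      by (simp add: std_normal_density_def scaleR_conv_of_real wave_packet_def)
  qed
  moreover have "char std_normal_distribution \<theta> = (\<integral>t. std_normal_density t *\<^sub>R iexp (\<theta> * t) \<partial>lborel)"
    unfolding char_def by (rule integral_density) (auto simp: normal_density_nonneg)
  ultimately have "of_real (exp (- \<theta>\<^sup>2 / 2))
      = of_real (1 / sqrt (2 * pi)) * integral\<^sup>L lborel (wave_packet 1 \<theta> (1/2))"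
    by (simp add: char_std_normal_distribution)
  then show ?thesis
    by (simp add: field_simps)
qed

lemma integral_wave_packet:
  assumes "a > 0"
  shows "integral\<^sup>L lborel (wave_packet 1 \<theta> a) = of_real (sqrt (pi / a) * exp (- \<theta>\<^sup>2 / (4 * a)))"
proof -
  define c where "c = sqrt (2 * a)"
  have c: "c > 0" "c\<^sup>2 = 2 * a"
    using assms by (auto simp: c_def)
  have "wave_packet 1 (\<theta> / c) (1/2) (0 + c * t) = wave_packet 1 \<theta> a t" for t
  proof -
    have "of_real (1/2) * (of_real (c * t))\<^sup>2 = of_real a * (of_real t :: complex)\<^sup>2"
      using c by (simp add: power_mult_distrib flip: of_real_power)
    moreover have "(\<theta> / c) * (c * t) = \<theta> * t"
      using c by simp
    then have "of_real (\<theta> / c) * of_real (c * t) = of_real \<theta> * (of_real t :: complex)"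
      by (metis of_real_mult)
    ultimately have "- of_real (1/2) * (of_real (c * t))\<^sup>2 + \<i> * of_real (\<theta> / c) * of_real (c * t)
        = - of_real a * (of_real t)\<^sup>2 + \<i> * of_real \<theta> * (of_real t :: complex)"
      by (metis minus_mult_left mult.assoc)
    then show ?thesis
      unfolding wave_packet_def add_0_left by (simp only: poly_1)
  qed
  then have "integral\<^sup>L lborel (wave_packet 1 (\<theta> / c) (1/2)) = c *\<^sub>R integral\<^sup>L lborel (wave_packet 1 \<theta> a)"
    using lborel_integral_real_affine[of c "wave_packet 1 (\<theta> / c) (1/2)" 0] c by simp
  moreover have "sqrt (2 * pi) / c = sqrt (pi / a)"
    unfolding c_def real_sqrt_divide[symmetric] by simp
  moreover have "(\<theta> / c)\<^sup>2 / 2 = \<theta>\<^sup>2 / (4 * a)"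
    using c by (simp add: power_divide)
  ultimately show ?thesis
    using c by (simp add: integral_wave_packet_half scaleR_conv_of_real field_simps)
qed

lemma fourier_wave_packet:
  assumes "a > 0"
  shows "fourier (wave_packet 1 \<theta> a) \<tau> = of_real (sqrt (pi / a) * exp (- (\<tau> - \<theta>)\<^sup>2 / (4 * a)))"
  unfolding fourier_wave_packet_eq_integral integral_wave_packet[OF assms]
  by (simp add: power2_commute)

lemma fourier_wave_packet_deriv:
  assumes "a > 0"
  shows "fourier (wave_packet (packet_deriv \<theta> a p) \<theta> a) \<tau> = \<i> * of_real \<tau> * fourier (wave_packet p \<theta> a) \<tau>"
proof -
  have "wave_packet (packet_deriv \<theta> a p) (\<theta> - \<tau>) a
      = (\<lambda>t. wave_packet (packet_deriv (\<theta> - \<tau>) a p) (\<theta> - \<tau>) a t + \<i> * of_real \<tau> * wave_packet p (\<theta> - \<tau>) a t)"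
    by (simp add: fun_eq_iff wave_packet_def packet_deriv_def algebra_simps)
  then have "fourier (wave_packet (packet_deriv \<theta> a p) \<theta> a) \<tau>
      = integral\<^sup>L lborel (wave_packet (packet_deriv (\<theta> - \<tau>) a p) (\<theta> - \<tau>) a)
        + \<i> * of_real \<tau> * integral\<^sup>L lborel (wave_packet p (\<theta> - \<tau>) a)"
    unfolding fourier_wave_packet_eq_integral
    using assms by (simp add: Bochner_Integration.integral_add integrable_wave_packet)
  then show ?thesis
    using assms by (simp add: integral_wave_packet_deriv fourier_wave_packet_eq_integral)
qed

section \<open>Japanese brackets and Gaussian weights\<close>

lemma jbr_ge_1: "1 \<le> jbr y"
  unfolding jbr_def by simp

lemma jbr_pos: "0 < jbr y"
  using jbr_ge_1[of y] by linarith

lemma abs_le_jbr: "\<bar>y\<bar> \<le> jbr y"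
proof -
  have "sqrt (y\<^sup>2) \<le> sqrt (1 + y\<^sup>2)"
    by (rule real_sqrt_le_mono) simp
  then show ?thesis
    by (simp add: jbr_def)
qed

lemma jbr_le_1_plus_abs: "jbr y \<le> 1 + \<bar>y\<bar>"
proof -
  have "1 + y\<^sup>2 \<le> (1 + \<bar>y\<bar>)\<^sup>2"
    by (simp add: power2_eq_square algebra_simps)
  then show ?thesis
    unfolding jbr_def using real_sqrt_le_mono by fastforce
qed

lemma borel_measurable_jbr [measurable]: "jbr \<in> borel_measurable borel"
  unfolding jbr_def[abs_def] by measurable

lemma jbr_powr_le_shift:
  fixes \<xi> k N :: real
  assumes N: "N \<ge> 1"
  shows "jbr \<xi> powr k \<le> 2 powr \<bar>k\<bar> * N powr k * (1 + \<bar>\<xi> - N\<bar>) powr \<bar>k\<bar>"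
proof (cases "k \<ge> 0")
  case True
  have "\<bar>\<xi>\<bar> \<le> N + \<bar>\<xi> - N\<bar>"
    using N by (smt (verit))
  moreover have "1 * \<bar>\<xi> - N\<bar> \<le> 2 * N * \<bar>\<xi> - N\<bar>"
    using N by (intro mult_right_mono) auto
  ultimately have "jbr \<xi> \<le> 2 * N * (1 + \<bar>\<xi> - N\<bar>)"
    using jbr_le_1_plus_abs[of \<xi>] N by (simp add: algebra_simps)
  then have "jbr \<xi> powr k \<le> (2 * N * (1 + \<bar>\<xi> - N\<bar>)) powr k"
    using True jbr_pos[of \<xi>] by (intro powr_mono2) auto
  then show ?thesis
    using True N by (simp add: powr_mult)
next
  case False
  have "\<bar>\<xi> - N\<bar> \<le> jbr \<xi> * \<bar>\<xi> - N\<bar>"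
    using mult_right_mono[OF jbr_ge_1[of \<xi>] abs_ge_zero[of "\<xi> - N"]] by simp
  then have "N \<le> jbr \<xi> + jbr \<xi> * \<bar>\<xi> - N\<bar>"
    using abs_le_jbr[of \<xi>] by linarith
  then have "N / (1 + \<bar>\<xi> - N\<bar>) \<le> jbr \<xi>"
    by (simp add: divide_le_eq algebra_simps add_pos_nonneg)
  then have "jbr \<xi> powr k \<le> (N / (1 + \<bar>\<xi> - N\<bar>)) powr k"
    using False N by (intro powr_mono2') auto
  also have "\<dots> = N powr k * (1 + \<bar>\<xi> - N\<bar>) powr \<bar>k\<bar>"
  proof -
    have "(N / (1 + \<bar>\<xi> - N\<bar>)) powr k = N powr k / (1 + \<bar>\<xi> - N\<bar>) powr k"
      using N by (simp add: powr_divide)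
    then show ?thesis
      using False by (simp add: powr_minus divide_inverse)
  qed
  also have "\<dots> \<le> 2 powr \<bar>k\<bar> * (N powr k * (1 + \<bar>\<xi> - N\<bar>) powr \<bar>k\<bar>)"
    using mult_right_mono[OF ge_one_powr_ge_zero[of 2 "\<bar>k\<bar>"], of "N powr k * (1 + \<bar>\<xi> - N\<bar>) powr \<bar>k\<bar>"]
    by simp
  finally show ?thesis
    by (simp add: ac_simps)
qed

lemma jbr_powr_times_abs_le_shift:
  fixes N s \<xi> :: real
  assumes N: "N \<ge> 0"
  shows "jbr \<xi> powr s * \<bar>\<xi>\<bar> \<le> (1 + N) powr (\<bar>s\<bar> + 1) * (1 + \<bar>\<xi> - N\<bar>) powr (\<bar>s\<bar> + 1)"
proof -
  have "jbr \<xi> powr s * \<bar>\<xi>\<bar> \<le> (1 + \<bar>\<xi>\<bar>) powr \<bar>s\<bar> * (1 + \<bar>\<xi>\<bar>)"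
  proof (rule mult_mono)
    have "jbr \<xi> powr s \<le> jbr \<xi> powr \<bar>s\<bar>"
      using jbr_ge_1 by (intro powr_mono) auto
    also have "\<dots> \<le> (1 + \<bar>\<xi>\<bar>) powr \<bar>s\<bar>"
      using jbr_le_1_plus_abs jbr_pos[of \<xi>] by (intro powr_mono2) (auto simp: less_imp_le)
    finally show "jbr \<xi> powr s \<le> (1 + \<bar>\<xi>\<bar>) powr \<bar>s\<bar>" .
  qed auto
  also have "\<dots> = (1 + \<bar>\<xi>\<bar>) powr (\<bar>s\<bar> + 1)"
    by (simp add: powr_add)
  also have "\<dots> \<le> ((1 + N) * (1 + \<bar>\<xi> - N\<bar>)) powr (\<bar>s\<bar> + 1)"
  proof (rule powr_mono2)
    have "\<bar>\<xi>\<bar> \<le> N + \<bar>\<xi> - N\<bar>"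
      using N by (smt (verit))
    then show "1 + \<bar>\<xi>\<bar> \<le> (1 + N) * (1 + \<bar>\<xi> - N\<bar>)"
      using mult_nonneg_nonneg[OF N abs_ge_zero[of "\<xi> - N"]] by (simp add: algebra_simps)
  qed auto
  finally show ?thesis
    using N by (simp add: powr_mult)
qed

lemma jbr_parabola_le:
  fixes \<tau> \<xi> N :: real
  assumes N: "N \<ge> 1"
  shows "jbr (\<tau> + \<xi>\<^sup>2) \<le> 2 * N * ((1 + \<bar>\<tau> + N\<^sup>2\<bar>) * (1 + \<bar>\<xi> - N\<bar>)\<^sup>2)"
proof -
  define A B where "A = \<bar>\<tau> + N\<^sup>2\<bar>" and "B = \<bar>\<xi> - N\<bar>"
  have AB: "A \<ge> 0" "B \<ge> 0"
    by (auto simp: A_def B_def)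
  have "\<tau> + \<xi>\<^sup>2 = (\<tau> + N\<^sup>2) + 2 * N * (\<xi> - N) + (\<xi> - N)\<^sup>2"
    by (simp add: power2_eq_square algebra_simps)
  then have "\<bar>\<tau> + \<xi>\<^sup>2\<bar> \<le> \<bar>\<tau> + N\<^sup>2\<bar> + \<bar>2 * N * (\<xi> - N)\<bar> + \<bar>(\<xi> - N)\<^sup>2\<bar>"
    by (metis abs_triangle_ineq add_right_mono order_trans)
  also have "\<dots> = A + 2 * N * B + B\<^sup>2"
    using N by (simp add: A_def B_def abs_mult)
  finally have "jbr (\<tau> + \<xi>\<^sup>2) \<le> 1 + A + 2 * N * B + B\<^sup>2"
    using jbr_le_1_plus_abs[of "\<tau> + \<xi>\<^sup>2"] by linarith
  also have "\<dots> \<le> 2 * N * (1 + A + 2 * B + B\<^sup>2)"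
  proof -
    have "1 * A \<le> 2 * N * A" and "1 * B\<^sup>2 \<le> 2 * N * B\<^sup>2"
      using N AB by (intro mult_right_mono; simp)+
    moreover have "0 \<le> N * B"
      using N AB by simp
    moreover have "2 * N * (1 + A + 2 * B + B\<^sup>2) = 2 * N + 2 * N * A + 4 * (N * B) + 2 * N * B\<^sup>2"
      by (simp add: algebra_simps)
    ultimately show ?thesis
      using N by linarith
  qed
  also have "\<dots> \<le> 2 * N * ((1 + A) * (1 + B)\<^sup>2)"
  proof (rule mult_left_mono)
    have "A * 1 \<le> A * (1 + B)\<^sup>2"
      using AB by (intro mult_left_mono one_le_power) auto
    then show "1 + A + 2 * B + B\<^sup>2 \<le> (1 + A) * (1 + B)\<^sup>2"
      by (simp add: power2_eq_square algebra_simps)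
  qed (use N in auto)
  finally show ?thesis
    unfolding A_def B_def .
qed

definition gauss_weight :: "real \<Rightarrow> real \<Rightarrow> real \<Rightarrow> real" where
  "gauss_weight p a x = (1 + \<bar>x\<bar>) powr p * exp (- a * x\<^sup>2)"

lemma integrable_gauss_weight_square:
  assumes "a > 0"
  shows "integrable lborel (\<lambda>x. (gauss_weight p a x)\<^sup>2)"
proof -
  obtain M where M: "\<And>x. (1 + \<bar>x\<bar>) powr (2 * p) * exp (- a * x\<^sup>2) \<le> M"
    using powr_times_gaussian_bounded[OF assms] by blast
  have square: "(gauss_weight p a x)\<^sup>2 = (1 + \<bar>x\<bar>) powr (2 * p) * exp (- a * x\<^sup>2) * exp (- a * x\<^sup>2)" for x
    by (simp add: gauss_weight_def power2_eq_square powr_add[symmetric] ac_simps)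
  have "integrable lborel (\<lambda>x. M * exp (- a * x\<^sup>2))"
    using assms by (intro integrable_mult_right integrable_gaussian)
  then show ?thesis
  proof (rule Bochner_Integration.integrable_bound)
    show "AE x in lborel. norm ((gauss_weight p a x)\<^sup>2) \<le> norm (M * exp (- a * x\<^sup>2))"
      unfolding square using M by (intro AE_I2) (simp add: mult_right_mono order_trans[OF _ abs_ge_self])
  qed (simp add: gauss_weight_def)
qed

lemma
  fixes f g :: "real \<Rightarrow> real"
  assumes f: "integrable lborel (\<lambda>x. (f x)\<^sup>2)" and g: "integrable lborel (\<lambda>x. (g x)\<^sup>2)"
  shows integrable_square_shifted_product:
      "integrable lborel (\<lambda>z::real \<times> real. (f (fst z + \<alpha>) * g (snd z + \<beta>))\<^sup>2)"
    and integral_square_shifted_product: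
      "(\<integral>z. (f (fst z + \<alpha>) * g (snd z + \<beta>))\<^sup>2 \<partial>lborel)
         = (\<integral>x. (f x)\<^sup>2 \<partial>lborel) * (\<integral>x. (g x)\<^sup>2 \<partial>lborel)"
proof -
  have shift: "integrable lborel (\<lambda>x. (h (x + \<gamma>))\<^sup>2)"
      "(\<integral>x. (h (x + \<gamma>))\<^sup>2 \<partial>lborel) = (\<integral>x. (h x)\<^sup>2 \<partial>lborel)"
    if "integrable lborel (\<lambda>x. (h x)\<^sup>2)" for h :: "real \<Rightarrow> real" and \<gamma>
    using that lborel_integrable_real_affine_iff[where c = 1 and f = "\<lambda>x. (h x)\<^sup>2" and t = \<gamma>]
      lborel_integral_real_affine[where c = 1 and f = "\<lambda>x. (h x)\<^sup>2" and t = \<gamma>]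
    by (simp_all add: add.commute)
  have "(f (fst z + \<alpha>) * g (snd z + \<beta>))\<^sup>2 = (f (fst z + \<alpha>))\<^sup>2 * (g (snd z + \<beta>))\<^sup>2" for z
    by (simp add: power_mult_distrib)
  then show "integrable lborel (\<lambda>z::real \<times> real. (f (fst z + \<alpha>) * g (snd z + \<beta>))\<^sup>2)"
    and "(\<integral>z. (f (fst z + \<alpha>) * g (snd z + \<beta>))\<^sup>2 \<partial>lborel)
         = (\<integral>x. (f x)\<^sup>2 \<partial>lborel) * (\<integral>x. (g x)\<^sup>2 \<partial>lborel)"
    using integrable_lborel_product[OF shift(1)[OF f] shift(1)[OF g]]
      integral_lborel_product[OF shift(1)[OF f] shift(1)[OF g]]
    by (simp_all add: shift(2)[OF f] shift(2)[OF g])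
qed

lemma integral_ge_on_unit_box:
  fixes F :: "real \<times> real \<Rightarrow> real"
  assumes "integrable lborel F" and "\<And>z. 0 \<le> F z"
    and "\<And>t x. \<bar>t - \<alpha>\<bar> \<le> 1 \<Longrightarrow> \<bar>x - \<beta>\<bar> \<le> 1 \<Longrightarrow> m \<le> F (t, x)"
  shows "4 * m \<le> integral\<^sup>L lborel F"
proof -
  define I :: "real \<Rightarrow> real" where "I = indicator {-1..1}"
  have "(\<lambda>x. (I x)\<^sup>2) = I"
    by (auto simp: I_def indicator_def fun_eq_iff)
  then have I: "integrable lborel (\<lambda>x. (I x)\<^sup>2)" "(\<integral>x. (I x)\<^sup>2 \<partial>lborel) = 2"
    by (auto simp: I_def emeasure_lborel_Icc_eq intro: integrable_real_indicator)
  have "(\<integral>z. m * (I (fst z + - \<alpha>) * I (snd z + - \<beta>))\<^sup>2 \<partial>lborel) \<le> integral\<^sup>L lborel F"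
  proof (rule integral_mono)
    show "m * (I (fst z + - \<alpha>) * I (snd z + - \<beta>))\<^sup>2 \<le> F z" for z
      using assms(2)[of z] assms(3)[of "fst z" "snd z"] by (cases z) (auto simp: I_def indicator_def abs_le_iff)
  qed (use assms(1) integrable_square_shifted_product[OF I(1) I(1), of "- \<alpha>" "- \<beta>"] in auto)
  then show ?thesis
    using integral_square_shifted_product[OF I(1) I(1), of "- \<alpha>" "- \<beta>"] I(2) by simp
qed

section \<open>The counterexample\<close>

text \<open>\<open>probe N\<close> is \<open>u\<^sub>1\<close> and \<open>probe 0\<close> is \<open>u\<^sub>2\<close>.\<close>

definition probe :: "real \<Rightarrow> real \<times> real \<Rightarrow> complex" where
  "probe N = tensor (wave_packet 1 (- N\<^sup>2) (1/4)) (wave_packet 1 N (1/4))"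

definition probe_interaction :: "real \<Rightarrow> real \<times> real \<Rightarrow> complex" where
  "probe_interaction N = dx (\<lambda>z. probe N z * cnj (probe 0 z))"

lemma schwartz_probe: "schwartz (probe N)"
  unfolding probe_def by (rule schwartz_tensor_wave_packet) simp_all

lemma norm_fourier2_probe:
  "norm (fourier2 (probe N) (\<tau>, \<xi>)) = 4 * pi * exp (- (\<tau> + N\<^sup>2)\<^sup>2) * exp (- (\<xi> - N)\<^sup>2)"
proof -
  have "sqrt (pi / (1/4)) = 2 * sqrt pi"
    by (simp add: real_sqrt_mult)
  then show ?thesis
    unfolding probe_def
    by (simp add: fourier2_tensor integrable_wave_packet fourier_wave_packet norm_mult)
qed

lemma probe_interaction_eq:
  "probe_interaction N
     = tensor (wave_packet 1 (- N\<^sup>2) (1/2)) (wave_packet (packet_deriv N (1/2) 1) N (1/2))"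
proof -
  have "probe N (t, x) * cnj (probe 0 (t, x))
      = (wave_packet 1 (- N\<^sup>2) (1/4) t * cnj (wave_packet 1 0 (1/4) t))
        * (wave_packet 1 N (1/4) x * cnj (wave_packet 1 0 (1/4) x))" for t x
    by (simp add: probe_def tensor_def ac_simps)
  then have "(\<lambda>z. probe N z * cnj (probe 0 z)) = tensor (wave_packet 1 (- N\<^sup>2) (1/2)) (wave_packet 1 N (1/2))"
    by (simp add: fun_eq_iff tensor_def wave_packet_mult_cnj)
  then show ?thesis
    unfolding probe_interaction_def by (simp add: dx_tensor has_vector_derivative_wave_packet)
qed

lemma norm_fourier2_probe_interaction:
  "norm (fourier2 (probe_interaction N) (\<tau>, \<xi>))
     = 2 * pi * \<bar>\<xi>\<bar> * exp (- (\<tau> + N\<^sup>2)\<^sup>2 / 2) * exp (- (\<xi> - N)\<^sup>2 / 2)"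
proof -
  have "sqrt (pi / (1/2)) * sqrt (pi / (1/2)) = 2 * pi"
    by simp
  then show ?thesis
    unfolding probe_interaction_eq
    by (simp add: fourier2_tensor integrable_wave_packet fourier_wave_packet_deriv fourier_wave_packet
        norm_mult)
qed

lemma X_weight_probe_le:
  fixes N b k \<tau> \<xi> :: real
  assumes N: "N \<ge> 1" and b: "b \<ge> 0"
  shows "jbr (\<tau> + \<xi>\<^sup>2) powr b * jbr \<xi> powr k * norm (fourier2 (probe N) (\<tau>, \<xi>))
    \<le> (2 powr b * 2 powr \<bar>k\<bar> * (4 * pi)) * N powr (b + k)
       * (gauss_weight b 1 (\<tau> + N\<^sup>2) * gauss_weight (2 * b + \<bar>k\<bar>) 1 (\<xi> - N))"
proof -
  define A B where "A = \<bar>\<tau> + N\<^sup>2\<bar>" and "B = \<bar>\<xi> - N\<bar>"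
  have AB: "A \<ge> 0" "B \<ge> 0"
    by (auto simp: A_def B_def)
  have "jbr (\<tau> + \<xi>\<^sup>2) powr b \<le> (2 * N * ((1 + A) * (1 + B)\<^sup>2)) powr b"
    using jbr_parabola_le[OF N] b jbr_pos[THEN less_imp_le] by (intro powr_mono2) (auto simp: A_def B_def)
  also have "\<dots> = 2 powr b * N powr b * ((1 + A) powr b * (1 + B) powr (2 * b))"
  proof -
    have "(1 + B)\<^sup>2 = (1 + B) powr 2"
      using AB by (simp add: powr_numeral)
    then have "((1 + B)\<^sup>2) powr b = (1 + B) powr (2 * b)"
      by (simp only: powr_powr)
    then show ?thesis
      using N AB by (simp add: powr_mult)
  qed
  finally have parabola: "jbr (\<tau> + \<xi>\<^sup>2) powr b \<le> \<dots>" .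
  have "jbr (\<tau> + \<xi>\<^sup>2) powr b * jbr \<xi> powr k * norm (fourier2 (probe N) (\<tau>, \<xi>))
      \<le> (2 powr b * N powr b * ((1 + A) powr b * (1 + B) powr (2 * b)))
        * (2 powr \<bar>k\<bar> * N powr k * (1 + B) powr \<bar>k\<bar>)
        * (4 * pi * exp (- (\<tau> + N\<^sup>2)\<^sup>2) * exp (- (\<xi> - N)\<^sup>2))"
    unfolding norm_fourier2_probe B_def
    by (intro mult_mono parabola[unfolded B_def] jbr_powr_le_shift N) auto
  also have "\<dots> = (2 powr b * 2 powr \<bar>k\<bar> * (4 * pi)) * N powr (b + k)
       * (gauss_weight b 1 (\<tau> + N\<^sup>2) * gauss_weight (2 * b + \<bar>k\<bar>) 1 (\<xi> - N))"
    by (simp add: gauss_weight_def A_def B_def powr_add ac_simps)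
  finally show ?thesis .
qed

lemma Xnorm_probe_le:
  assumes "b \<ge> 0"
  obtains K where "\<And>N. N \<ge> 1 \<Longrightarrow> Xnorm k b (probe N) \<le> K * N powr (b + k)"
proof -
  define C where "C = 2 powr b * 2 powr \<bar>k\<bar> * (4 * pi)"
  define w v where "w = gauss_weight b 1" and "v = gauss_weight (2 * b + \<bar>k\<bar>) 1"
  have wv: "integrable lborel (\<lambda>x. (w x)\<^sup>2)" "integrable lborel (\<lambda>x. (v x)\<^sup>2)"
    unfolding w_def v_def by (simp_all add: integrable_gauss_weight_square)
  define I where "I = (\<integral>x. (w x)\<^sup>2 \<partial>lborel) * (\<integral>x. (v x)\<^sup>2 \<partial>lborel)"
  have "Xnorm k b (probe N) \<le> C * sqrt I * N powr (b + k)" if N: "N \<ge> 1" for N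
  proof -
    have "(\<integral>(\<tau>, \<xi>). (jbr (\<tau> + \<xi>\<^sup>2) powr b * jbr \<xi> powr k * norm (fourier2 (probe N) (\<tau>, \<xi>)))\<^sup>2 \<partial>lborel)
        \<le> (\<integral>z. (C * N powr (b + k))\<^sup>2 * (w (fst z + N\<^sup>2) * v (snd z + - N))\<^sup>2 \<partial>lborel)"
    proof (rule integral_mono')
      show "integrable lborel (\<lambda>z. (C * N powr (b + k))\<^sup>2 * (w (fst z + N\<^sup>2) * v (snd z + - N))\<^sup>2)"
        by (intro integrable_mult_right integrable_square_shifted_product wv)
      show "(\<lambda>(\<tau>, \<xi>). (jbr (\<tau> + \<xi>\<^sup>2) powr b * jbr \<xi> powr k * norm (fourier2 (probe N) (\<tau>, \<xi>)))\<^sup>2) z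
          \<le> (C * N powr (b + k))\<^sup>2 * (w (fst z + N\<^sup>2) * v (snd z + - N))\<^sup>2" for z
        using power_mono[OF X_weight_probe_le[OF N assms, of "fst z" "snd z" k], of 2]
        by (cases z) (simp add: C_def w_def v_def power_mult_distrib)
    qed simp
    also have "\<dots> = (C * N powr (b + k))\<^sup>2 * I"
      using integral_square_shifted_product[OF wv, of "N\<^sup>2" "- N"] by (simp add: I_def)
    finally show ?thesis
      unfolding Xnorm_def
      by (rule order_trans[OF real_sqrt_le_mono]) (simp add: real_sqrt_mult C_def)
  qed
  then show ?thesis
    using that by blast
qed

lemma Y_weight_probe_interaction_le:
  fixes N s b' \<tau> \<xi> :: real
  assumes N: "N \<ge> 0" and b': "b' \<le> 0"
  shows "jbr (\<tau> - \<xi> ^ 3) powr b' * jbr \<xi> powr s * norm (fourier2 (probe_interaction N) (\<tau>, \<xi>))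
    \<le> 2 * pi * (1 + N) powr (\<bar>s\<bar> + 1)
       * (gauss_weight 0 (1/2) (\<tau> + N\<^sup>2) * gauss_weight (\<bar>s\<bar> + 1) (1/2) (\<xi> - N))"
proof -
  have "jbr (\<tau> - \<xi> ^ 3) powr b' \<le> jbr (\<tau> - \<xi> ^ 3) powr 0"
    using b' jbr_ge_1 by (intro powr_mono) auto
  then have cubic: "jbr (\<tau> - \<xi> ^ 3) powr b' \<le> 1"
    using jbr_pos[of "\<tau> - \<xi> ^ 3"] by simp
  have "jbr (\<tau> - \<xi> ^ 3) powr b' * jbr \<xi> powr s * norm (fourier2 (probe_interaction N) (\<tau>, \<xi>))
      = jbr (\<tau> - \<xi> ^ 3) powr b' * (jbr \<xi> powr s * \<bar>\<xi>\<bar>)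
        * (2 * pi * exp (- (\<tau> + N\<^sup>2)\<^sup>2 / 2) * exp (- (\<xi> - N)\<^sup>2 / 2))"
    by (simp add: norm_fourier2_probe_interaction ac_simps)
  also have "\<dots> \<le> 1 * ((1 + N) powr (\<bar>s\<bar> + 1) * (1 + \<bar>\<xi> - N\<bar>) powr (\<bar>s\<bar> + 1))
        * (2 * pi * exp (- (\<tau> + N\<^sup>2)\<^sup>2 / 2) * exp (- (\<xi> - N)\<^sup>2 / 2))"
    by (intro mult_right_mono mult_mono[OF cubic jbr_powr_times_abs_le_shift[OF N]]) auto
  also have "\<dots> = 2 * pi * (1 + N) powr (\<bar>s\<bar> + 1)
       * (gauss_weight 0 (1/2) (\<tau> + N\<^sup>2) * gauss_weight (\<bar>s\<bar> + 1) (1/2) (\<xi> - N))"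
    by (simp add: gauss_weight_def ac_simps)
  finally show ?thesis .
qed

lemma integrable_Y_weight_probe_interaction:
  assumes N: "N \<ge> 0" and b': "b' \<le> 0"
  shows "integrable lborel (\<lambda>(\<tau>, \<xi>).
           (jbr (\<tau> - \<xi> ^ 3) powr b' * jbr \<xi> powr s * norm (fourier2 (probe_interaction N) (\<tau>, \<xi>)))\<^sup>2)"
    (is "integrable lborel ?F")
proof -
  define C where "C = 2 * pi * (1 + N) powr (\<bar>s\<bar> + 1)"
  define w v where "w = gauss_weight 0 (1/2)" and "v = gauss_weight (\<bar>s\<bar> + 1) (1/2)"
  have "integrable lborel (\<lambda>z. C\<^sup>2 * (w (fst z + N\<^sup>2) * v (snd z + - N))\<^sup>2)"
    unfolding w_def v_def
    by (intro integrable_mult_right integrable_square_shifted_product integrable_gauss_weight_square)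
      simp_all
  then show ?thesis
  proof (rule Bochner_Integration.integrable_bound)
    have "(\<lambda>(\<tau>, \<xi>). (jbr (\<tau> - \<xi> ^ 3) powr b' * jbr \<xi> powr s
        * (2 * pi * \<bar>\<xi>\<bar> * exp (- (\<tau> + N\<^sup>2)\<^sup>2 / 2) * exp (- (\<xi> - N)\<^sup>2 / 2)))\<^sup>2)
        \<in> borel_measurable (lborel \<Otimes>\<^sub>M lborel)"
      by measurable
    then show "?F \<in> borel_measurable lborel"
      by (simp add: lborel_prod norm_fourier2_probe_interaction)
    have "norm (?F z) \<le> norm (C\<^sup>2 * (w (fst z + N\<^sup>2) * v (snd z + - N))\<^sup>2)" for z
      using power_mono[OF Y_weight_probe_interaction_le[OF N b', of "fst z" "snd z" s], of 2]
      by (cases z) (simp add: C_def w_def v_def power_mult_distrib)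
    then show "AE z in lborel. norm (?F z) \<le> norm (C\<^sup>2 * (w (fst z + N\<^sup>2) * v (snd z + - N))\<^sup>2)"
      by simp
  qed
qed

lemma jbr_cubic_le:
  fixes N \<tau> \<xi> :: real
  assumes N: "N \<ge> 2" and "\<bar>\<tau> + N\<^sup>2\<bar> \<le> 1" and "\<bar>\<xi> - N\<bar> \<le> 1"
  shows "jbr (\<tau> - \<xi> ^ 3) \<le> 10 * N ^ 3"
proof -
  have "\<bar>\<tau> - \<xi> ^ 3\<bar> \<le> \<bar>\<tau>\<bar> + \<bar>\<xi>\<bar> ^ 3"
    by (metis abs_triangle_ineq4 power_abs)
  moreover have "\<bar>\<tau>\<bar> \<le> N\<^sup>2 + 1"
    using assms(2) zero_le_power2[of N] by (smt (verit))
  moreover have "\<bar>\<xi>\<bar> ^ 3 \<le> (N + 1) ^ 3"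
    using assms(1,3) by (intro power_mono) (auto simp: abs_le_iff)
  moreover have "1 + (N\<^sup>2 + 1) + (N + 1) ^ 3 \<le> 10 * N ^ 3"
  proof -
    have "2 * N\<^sup>2 \<le> N ^ 3" "2 * N \<le> N\<^sup>2"
      using N mult_right_mono[of 2 N "N\<^sup>2"] mult_right_mono[of 2 N N]
      by (simp_all add: power3_eq_cube power2_eq_square ac_simps)
    moreover have "(N + 1) ^ 3 = N ^ 3 + 3 * N\<^sup>2 + 3 * N + 1"
      by (simp add: power3_eq_cube power2_eq_square algebra_simps)
    ultimately show ?thesis
      using N by linarith
  qed
  ultimately show ?thesis
    using jbr_le_1_plus_abs[of "\<tau> - \<xi> ^ 3"] by linarith
qed

lemma jbr_powr_ge_near:
  fixes N \<xi> s :: real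
  assumes N: "N \<ge> 2" and \<xi>: "\<bar>\<xi> - N\<bar> \<le> 1"
  shows "2 powr (- \<bar>s\<bar>) * N powr s \<le> jbr \<xi> powr s"
proof (cases "s \<ge> 0")
  case True
  have "N / 2 \<le> \<xi>"
    using \<xi> N by (simp add: abs_le_iff)
  also have "\<xi> \<le> jbr \<xi>"
    by (rule order_trans[OF abs_ge_self abs_le_jbr])
  finally have "(N / 2) powr s \<le> jbr \<xi> powr s"
    using True N by (intro powr_mono2) auto
  moreover have "(N / 2) powr s = 2 powr (- \<bar>s\<bar>) * N powr s"
    using N True by (simp add: powr_divide powr_minus_divide)
  ultimately show ?thesis
    by simp
next
  case False
  have "jbr \<xi> \<le> 1 + \<bar>\<xi>\<bar>"
    by (rule jbr_le_1_plus_abs)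
  also have "\<dots> \<le> 2 * N"
    using \<xi> N by (simp add: abs_le_iff)
  finally have "(2 * N) powr s \<le> jbr \<xi> powr s"
    using False jbr_pos[of \<xi>] by (intro powr_mono2') auto
  moreover have "(2 * N) powr s = 2 powr s * N powr s"
    using N by (simp add: powr_mult)
  ultimately show ?thesis
    using False by simp
qed

lemma Y_weight_probe_interaction_ge:
  fixes N s b' \<tau> \<xi> :: real
  assumes N: "N \<ge> 2" and b': "b' \<le> 0"
    and \<tau>: "\<bar>\<tau> + N\<^sup>2\<bar> \<le> 1" and \<xi>: "\<bar>\<xi> - N\<bar> \<le> 1"
  shows "(10 powr b' * 2 powr (- \<bar>s\<bar>) * pi * exp (- 1)) * N powr (1 + s + 3 * b')
    \<le> jbr (\<tau> - \<xi> ^ 3) powr b' * jbr \<xi> powr s * norm (fourier2 (probe_interaction N) (\<tau>, \<xi>))"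
proof -
  have "(10 * N ^ 3) powr b' \<le> jbr (\<tau> - \<xi> ^ 3) powr b'"
    using b' jbr_pos jbr_cubic_le[OF assms(1,3,4)] by (intro powr_mono2') auto
  moreover have "(10 * N ^ 3) powr b' = 10 powr b' * N powr (3 * b')"
  proof -
    have "N ^ 3 = N powr 3"
      using N by (simp add: powr_numeral)
    then have "(N ^ 3) powr b' = N powr (3 * b')"
      by (simp only: powr_powr)
    then show ?thesis
      using N by (simp add: powr_mult)
  qed
  ultimately have cubic: "10 powr b' * N powr (3 * b') \<le> jbr (\<tau> - \<xi> ^ 3) powr b'"
    by simp
  have "pi * N \<le> 2 * pi * \<bar>\<xi>\<bar>"
    using \<xi> N by (auto simp: abs_le_iff)
  moreover have "(\<tau> + N\<^sup>2)\<^sup>2 \<le> 1" "(\<xi> - N)\<^sup>2 \<le> 1"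
    using \<tau> \<xi> by (simp_all add: abs_square_le_1)
  then have "exp (- 1) \<le> exp (- (\<tau> + N\<^sup>2)\<^sup>2 / 2) * exp (- (\<xi> - N)\<^sup>2 / 2)"
    by (simp flip: exp_add)
  ultimately have "pi * N * exp (- 1) \<le> norm (fourier2 (probe_interaction N) (\<tau>, \<xi>))"
    unfolding norm_fourier2_probe_interaction mult.assoc[of "2 * pi * \<bar>\<xi>\<bar>"]
    by (rule mult_mono) auto
  then have "(10 powr b' * N powr (3 * b')) * (2 powr (- \<bar>s\<bar>) * N powr s) * (pi * N * exp (- 1))
      \<le> jbr (\<tau> - \<xi> ^ 3) powr b' * jbr \<xi> powr s * norm (fourier2 (probe_interaction N) (\<tau>, \<xi>))"
    using N by (intro mult_mono cubic jbr_powr_ge_near[OF N \<xi>]) auto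
  moreover have "(10 powr b' * 2 powr (- \<bar>s\<bar>) * pi * exp (- 1)) * N powr (1 + s + 3 * b')
      = (10 powr b' * N powr (3 * b')) * (2 powr (- \<bar>s\<bar>) * N powr s) * (pi * N * exp (- 1))"
    using N by (simp add: powr_add ac_simps)
  ultimately show ?thesis
    by (simp only:)
qed

lemma Ynorm_probe_interaction_ge:
  assumes "b' \<le> 0"
  obtains c where "c > 0" and "\<And>N. N \<ge> 2 \<Longrightarrow> c * N powr (1 + s + 3 * b') \<le> Ynorm s b' (probe_interaction N)"
proof
  define c where "c = 10 powr b' * 2 powr (- \<bar>s\<bar>) * pi * exp (- 1)"
  show "2 * c > 0"
    by (simp add: c_def)
  fix N :: real
  assume N: "N \<ge> 2"
  have "4 * (c * N powr (1 + s + 3 * b'))\<^sup>2 \<le> (\<integral>(\<tau>, \<xi>).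
      (jbr (\<tau> - \<xi> ^ 3) powr b' * jbr \<xi> powr s * norm (fourier2 (probe_interaction N) (\<tau>, \<xi>)))\<^sup>2 \<partial>lborel)"
  proof (rule integral_ge_on_unit_box[of _ "- N\<^sup>2" N])
    show "integrable lborel (\<lambda>(\<tau>, \<xi>).
        (jbr (\<tau> - \<xi> ^ 3) powr b' * jbr \<xi> powr s * norm (fourier2 (probe_interaction N) (\<tau>, \<xi>)))\<^sup>2)"
      using N assms by (intro integrable_Y_weight_probe_interaction) auto
    show "(c * N powr (1 + s + 3 * b'))\<^sup>2 \<le> (\<lambda>(\<tau>, \<xi>).
        (jbr (\<tau> - \<xi> ^ 3) powr b' * jbr \<xi> powr s * norm (fourier2 (probe_interaction N) (\<tau>, \<xi>)))\<^sup>2) (\<tau>, \<xi>)"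
      if "\<bar>\<tau> - - N\<^sup>2\<bar> \<le> 1" "\<bar>\<xi> - N\<bar> \<le> 1" for \<tau> \<xi>
      using that Y_weight_probe_interaction_ge[OF N assms, of \<tau> \<xi> s]
      by (simp add: c_def power_mono)
  qed (auto split: prod.split)
  then show "2 * c * N powr (1 + s + 3 * b') \<le> Ynorm s b' (probe_interaction N)"
    unfolding Ynorm_def
    by (rule order_trans[OF eq_refl real_sqrt_le_mono, rotated])
      (simp add: real_sqrt_mult c_def)
qed

lemma Xnorm_nonneg: "0 \<le> Xnorm k b u"
  unfolding Xnorm_def by (intro real_sqrt_ge_zero integral_nonneg_AE) auto

lemma powr_exponent_le_if_bounded:
  fixes c D e1 e2 :: real
  assumes "c > 0" and "\<And>N. N \<ge> 2 \<Longrightarrow> c * N powr e1 \<le> D * N powr e2"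
  shows "e1 \<le> e2"
proof (rule ccontr)
  assume "\<not> e1 \<le> e2"
  then have "filterlim (\<lambda>N. N powr (e1 - e2)) at_top at_top"
    by real_asymp
  then have "eventually (\<lambda>N. D / c < N powr (e1 - e2)) at_top"
    by (simp add: filterlim_at_top_dense)
  then obtain N0 where N0: "\<And>N. N \<ge> N0 \<Longrightarrow> D / c < N powr (e1 - e2)"
    by (auto simp: eventually_at_top_linorder)
  define N where "N = max 2 N0"
  have N: "N \<ge> 2" "D / c < N powr (e1 - e2)"
    using N0[of N] by (auto simp: N_def)
  then have "D * N powr e2 < (c * N powr (e1 - e2)) * N powr e2"
    using assms(1) by (intro mult_strict_right_mono) (auto simp: field_simps)
  also have "\<dots> = c * N powr e1"
    using N by (simp add: powr_diff)
  finally show False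
    using assms(2)[OF N(1)] by linarith
qed

theorem mainTheorem13:
  fixes k s b b' :: real
  assumes "k - s < -1"
    and "b > 1/2"
    and "-1/2 < b'" and "b' \<le> 0"
    and "1 + s - k + 3 * b' - b > 0"
  shows "\<not> (\<exists>C. \<forall>u1 u2. schwartz u1 \<longrightarrow> schwartz u2 \<longrightarrow>
           Ynorm s b' (dx (\<lambda>p. u1 p * cnj (u2 p))) \<le> C * Xnorm k b u1 * Xnorm k b u2)"
proof
  assume "\<exists>C. \<forall>u1 u2. schwartz u1 \<longrightarrow> schwartz u2 \<longrightarrow>
           Ynorm s b' (dx (\<lambda>p. u1 p * cnj (u2 p))) \<le> C * Xnorm k b u1 * Xnorm k b u2"
  then obtain C where bilinear: "\<And>N. Ynorm s b' (probe_interaction N) \<le> C * Xnorm k b (probe N) * Xnorm k b (probe 0)"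
    unfolding probe_interaction_def using schwartz_probe by blast
  obtain K where X: "\<And>N. N \<ge> 1 \<Longrightarrow> Xnorm k b (probe N) \<le> K * N powr (b + k)"
    using Xnorm_probe_le[of b k] assms(2) by auto
  obtain c where "c > 0" and Y: "\<And>N. N \<ge> 2 \<Longrightarrow> c * N powr (1 + s + 3 * b') \<le> Ynorm s b' (probe_interaction N)"
    using Ynorm_probe_interaction_ge[OF assms(4)] by blast
  have "c * N powr (1 + s + 3 * b') \<le> (max C 0 * K * Xnorm k b (probe 0)) * N powr (b + k)"
    if N: "N \<ge> 2" for N
  proof -
    have "c * N powr (1 + s + 3 * b') \<le> C * Xnorm k b (probe N) * Xnorm k b (probe 0)"
      using Y[OF N] bilinear[of N] by linarith
    also have "\<dots> \<le> max C 0 * (K * N powr (b + k)) * Xnorm k b (probe 0)"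
      using N X[of N] Xnorm_nonneg by (intro mult_right_mono mult_mono) auto
    finally show ?thesis
      by (simp only: ac_simps)
  qed
  with \<open>c > 0\<close> have "1 + s + 3 * b' \<le> b + k"
    by (rule powr_exponent_le_if_bounded)
  with assms(5) show False
    by simp
qed

end
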